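(* Let $a>0$, $\phi_a(x)=e^{-ax^2}$, and $f=\sum_{k\in\mathbb{Z}}c_k\phi_a(\cdot-k)$ with $c\in\ell^\infty(\mathbb{Z})$. Let $\lambda\in\mathbb{R}$ be a zero of $f$ with multiplicity $m$. Then for every $l\in\frac{\pi}{a}\mathbb{Z}$, $\lambda+il$ is a zero of the entire extension of $f$ with the same multiplicity $m$. In particular, if $f^{(j)}(\lambda)=0$ for $j=0,\dots,m-1$, then $f^{(j)}(\lambda+il)=0$ for $j=0,\dots,m-1$ and all $l\in\frac{\pi}{a}\mathbb{Z}$.
   Context: The function $z\mapsto\sum_k c_k e^{-a(z-k)^2}$ is entire and extends $f$; this is the entire extension referred to. *)

theory Defs
  imports "HOL-Complex_Analysis.Complex_Analysis"
begin

definition gauss_ext :: "real \<Rightarrow> (int \<Rightarrow> real) \<Rightarrow> complex \<Rightarrow> complex" where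
  "gauss_ext a c z =
     (\<Sum>\<^sub>\<infinity>k::int. complex_of_real (c k) * exp (- complex_of_real a * (z - of_int k)^2))"

definition zero_mult :: "(complex \<Rightarrow> complex) \<Rightarrow> complex \<Rightarrow> nat \<Rightarrow> bool" where
  "zero_mult F z0 m \<longleftrightarrow> 1 \<le> m \<and> (\<forall>j<m. (deriv ^^ j) F z0 = 0) \<and> (deriv ^^ m) F z0 \<noteq> 0"

end

theory Submission
  imports Defs
begin

text \<open>For \<open>a l \<in> \<pi>\<int>\<close>, translating the Gaussian series \<open>F\<close> by \<open>i l\<close> multiplies it by the
  nowhere-vanishing entire factor \<open>E z = exp (a l^2 - 2 i a l z)\<close>: each term
  \<open>exp (-a (z + i l - k)^2)\<close> equals \<open>E z exp (-a (z - k)^2)\<close> times \<open>exp (2 i a l k) = 1\<close>.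
  By Leibniz' rule the \<open>j\<close>-th derivative of \<open>F\<close> at \<open>z + i l\<close> is a combination of the derivatives
  of \<open>F\<close> at \<open>z\<close> of order at most \<open>j\<close>, with leading coefficient \<open>E z \<noteq> 0\<close>; hence \<open>F\<close> vanishes to
  the same order at \<open>z\<close> and at \<open>z + i l\<close>. That \<open>F\<close> is entire follows from the locally uniform
  convergence of the series, whose terms decay like \<open>exp (-2 a |k|)\<close>.\<close>

lemma summable_on_exp_neg_abs_int:
  fixes b :: real
  assumes "b > 0"
  shows "(\<lambda>k::int. exp (- b * real_of_int \<bar>k\<bar>)) summable_on UNIV"
proof -
  let ?f = "\<lambda>k::int. exp (- b * real_of_int \<bar>k\<bar>)"
  have geometric: "(\<lambda>n. exp (- b) ^ n) summable_on UNIV"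
    using assms by (intro norm_summable_imp_summable_on) (simp add: summable_geometric)
  have "?f \<circ> int = (\<lambda>n. exp (- b) ^ n)" and "?f \<circ> (\<lambda>n. - int n) = (\<lambda>n. exp (- b) ^ n)"
    by (auto simp: exp_of_nat_mult [symmetric] mult.commute)
  then have "?f summable_on range int" and "?f summable_on range (\<lambda>n. - int n)"
    using geometric by (subst summable_on_reindex; simp add: inj_on_def)+
  then have "?f summable_on (range int \<union> range (\<lambda>n. - int n))"
    by (rule summable_on_union)
  moreover have "range int \<union> range (\<lambda>n. - int n) = UNIV"
    by (auto intro: int_cases2)
  ultimately show ?thesis
    by simp
qed

lemma norm_gauss_term_le:
  fixes a R C r :: real and z :: complex and k :: int
  assumes "a > 0" and "norm z \<le> R" and "\<bar>r\<bar> \<le> C"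
  shows "norm (complex_of_real r * exp (- complex_of_real a * (z - of_int k)^2))
           \<le> C * exp (a * (R^2 + 2*R + 1)) * exp (- (2*a) * real_of_int \<bar>k\<bar>)"
proof -
  define x y where "x = Re z" and "y = Im z"
  have "\<bar>x\<bar> \<le> R" "\<bar>y\<bar> \<le> R"
    using assms(2) abs_Re_le_cmod[of z] abs_Im_le_cmod[of z] by (auto simp: x_def y_def)
  have square_ge: "2 * t - 1 \<le> t^2" for t :: real
    using zero_le_power2 [of "t - 1"] by (simp add: power2_diff)
  have "y^2 \<le> R^2"
    using \<open>\<bar>y\<bar> \<le> R\<close> by (metis abs_ge_zero power2_abs power_mono)
  moreover have "(x - k)^2 \<ge> 2 * \<bar>x - k\<bar> - 1"
    by (metis square_ge power2_abs)
  moreover have "\<bar>x - k\<bar> \<ge> \<bar>k\<bar> - R"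
    using \<open>\<bar>x\<bar> \<le> R\<close> by linarith
  ultimately have gap: "(x - k)^2 - y^2 \<ge> 2 * real_of_int \<bar>k\<bar> - (R^2 + 2*R + 1)"
    by (smt (verit))
  then have exponent: "- a * ((x - k)^2 - y^2) \<le> a * (R^2 + 2*R + 1) + - (2*a) * real_of_int \<bar>k\<bar>"
    using mult_left_mono [OF gap, of a] assms(1) by (simp add: algebra_simps)
  have "norm (exp (- complex_of_real a * (z - of_int k)^2))
          = exp (- a * ((x - k)^2 - y^2))"
    by (simp add: norm_exp_eq_Re x_def y_def power2_eq_square algebra_simps)
  also have "\<dots> \<le> exp (a * (R^2 + 2*R + 1)) * exp (- (2*a) * real_of_int \<bar>k\<bar>)"
    using exponent by (simp flip: exp_add)
  finally have "norm (exp (- complex_of_real a * (z - of_int k)^2))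
                  \<le> exp (a * (R^2 + 2*R + 1)) * exp (- (2*a) * real_of_int \<bar>k\<bar>)" .
  with assms(3) show ?thesis
    by (simp add: norm_mult mult.assoc mult_mono)
qed

lemma gauss_ext_holomorphic:
  assumes "a > 0" and "bounded (range c)"
  shows "gauss_ext a c holomorphic_on UNIV"
proof -
  obtain C where C: "\<And>k. \<bar>c k\<bar> \<le> C"
    using assms(2) unfolding bounded_iff by auto
  define t where "t k z = complex_of_real (c k) * exp (- complex_of_real a * (z - of_int k)^2)"
    for k :: int and z
  have partial_sums: "(\<lambda>z. \<Sum>k\<in>X. t k z) holomorphic_on UNIV" for X
    unfolding t_def by (intro holomorphic_intros)
  have "gauss_ext a c holomorphic_on ball 0 R" for R
  proof -
    have limit: "uniform_limit (cball 0 R) (\<lambda>X z. \<Sum>k\<in>X. t k z) (gauss_ext a c)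
            (finite_subsets_at_top UNIV)"
    proof (unfold gauss_ext_def, fold t_def, rule Weierstrass_m_test_general)
      show "norm (t k z) \<le> C * exp (a * (R^2 + 2*R + 1)) * exp (- (2*a) * real_of_int \<bar>k\<bar>)"
        if "z \<in> cball 0 R" for k z
        unfolding t_def using that by (intro norm_gauss_term_le [OF assms(1) _ C]) auto
      show "(\<lambda>k. C * exp (a * (R^2 + 2*R + 1)) * exp (- (2*a) * real_of_int \<bar>k\<bar>)) summable_on UNIV"
        using summable_on_cmult_right [OF summable_on_exp_neg_abs_int [of "2*a"],
              of "C * exp (a * (R^2 + 2*R + 1))"] assms(1)
        by (simp add: mult.assoc)
    qed
    have approx: "\<forall>\<^sub>F X in finite_subsets_at_top UNIV.
        continuous_on (cball 0 R) (\<lambda>z. \<Sum>k\<in>X. t k z) \<and> (\<lambda>z. \<Sum>k\<in>X. t k z) holomorphic_on ball 0 R"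
      using partial_sums
      by (intro always_eventually allI conjI)
        (auto intro: holomorphic_on_imp_continuous_on holomorphic_on_subset)
    show ?thesis
      by (rule holomorphic_uniform_limit [OF approx limit]) auto
  qed
  then show ?thesis
    by (metis UNIV_I holomorphic_on_imp_differentiable_at holomorphic_on_def
        field_differentiable_at_within open_ball centre_in_ball mem_ball_0 gt_ex)
qed

lemma gauss_ext_translate_imag:
  fixes l :: real and n :: int
  assumes "a * l = pi * of_int n"
  shows "gauss_ext a c (z + \<i> * of_real l)
           = exp (of_real a * of_real l ^ 2 - 2 * \<i> * of_real a * of_real l * z) * gauss_ext a c z"
proof -
  define e where "e = of_real a * of_real l ^ 2 - 2 * \<i> * of_real a * of_real l * z"
  have al: "of_real a * of_real l = of_real pi * (of_int n :: complex)"
    using arg_cong [OF assms, of complex_of_real] by simp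
  have "exp (- of_real a * (z + \<i> * of_real l - of_int k)^2) = exp e * exp (- of_real a * (z - of_int k)^2)"
    for k :: int
  proof -
    have "- of_real a * (z + \<i> * of_real l - of_int k)^2
            = e + - of_real a * (z - of_int k)^2 + 2 * \<i> * (of_real a * of_real l) * of_int k"
      by (simp add: e_def power2_eq_square algebra_simps)
    also have "\<dots> = e + - of_real a * (z - of_int k)^2 + 2 * of_int (n * k) * of_real pi * \<i>"
      by (simp add: al)
    finally have exponent: "- of_real a * (z + \<i> * of_real l - of_int k)^2
        = e + - of_real a * (z - of_int k)^2 + 2 * of_int (n * k) * of_real pi * \<i>" .
    have "exp (2 * of_int (n * k) * of_real pi * \<i>) = 1"
      using exp_integer_2pi [of "of_int (n * k)"] by (simp add: mult.commute)
    then show ?thesis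
      by (simp only: exponent exp_add mult_1_right)
  qed
  then show ?thesis
    unfolding gauss_ext_def e_def [symmetric]
    by (simp flip: infsum_cmult_right' add: ac_simps)
qed

lemma higher_deriv_translate:
  fixes F E :: "complex \<Rightarrow> complex"
  assumes "F holomorphic_on UNIV" and "E holomorphic_on UNIV" and "\<And>z. F (z + s) = E z * F z"
  shows "(deriv ^^ j) F (z + s)
           = (\<Sum>i = 0..j. of_nat (j choose i) * (deriv ^^ i) E z * (deriv ^^ (j - i)) F z)"
proof -
  have "(deriv ^^ j) F (z + s) = (deriv ^^ j) (\<lambda>w. F (1 * w + s)) z"
    using higher_deriv_compose_linear' [OF assms(1) open_UNIV open_UNIV, of z 1 s j] by simp
  also have "\<dots> = (deriv ^^ j) (\<lambda>w. E w * F w) z"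
    using assms(3) by simp
  also have "\<dots> = (\<Sum>i = 0..j. of_nat (j choose i) * (deriv ^^ i) E z * (deriv ^^ (j - i)) F z)"
    by (rule higher_deriv_mult [OF assms(2,1) open_UNIV UNIV_I])
  finally show ?thesis .
qed

lemma higher_deriv_translate_eq_0:
  fixes F E :: "complex \<Rightarrow> complex"
  assumes "F holomorphic_on UNIV" and "E holomorphic_on UNIV" and "\<And>z. F (z + s) = E z * F z"
    and "\<forall>i<m. (deriv ^^ i) F z = 0" and "j < m"
  shows "(deriv ^^ j) F (z + s) = 0"
  using assms(4,5) by (simp add: higher_deriv_translate [OF assms(1-3)])

lemma higher_deriv_translate_first_nonzero:
  fixes F E :: "complex \<Rightarrow> complex"
  assumes "F holomorphic_on UNIV" and "E holomorphic_on UNIV" and "\<And>z. F (z + s) = E z * F z"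
    and "\<forall>i<m. (deriv ^^ i) F z = 0"
  shows "(deriv ^^ m) F (z + s) = E z * (deriv ^^ m) F z"
proof -
  have "(\<Sum>i = Suc 0..m. of_nat (m choose i) * (deriv ^^ i) E z * (deriv ^^ (m - i)) F z) = 0"
    using assms(4) by (intro sum.neutral) auto
  then show ?thesis
    by (simp add: higher_deriv_translate [OF assms(1-3)] sum.atLeast_Suc_atMost)
qed

lemma zero_mult_translate:
  fixes F E :: "complex \<Rightarrow> complex"
  assumes "F holomorphic_on UNIV" and "E holomorphic_on UNIV" and "\<And>z. F (z + s) = E z * F z"
    and "E z \<noteq> 0" and "zero_mult F z m"
  shows "zero_mult F (z + s) m"
  using assms(4,5) higher_deriv_translate_eq_0 [OF assms(1-3)]
    higher_deriv_translate_first_nonzero [OF assms(1-3)]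
  by (simp add: zero_mult_def)

theorem lemma4p2:
  fixes a :: real and c :: "int \<Rightarrow> real" and lam :: real and m :: nat
  assumes "a > 0"
    and "bounded (range c)"
  shows "(zero_mult (gauss_ext a c) (complex_of_real lam) m \<longrightarrow>
            (\<forall>n::int. zero_mult (gauss_ext a c)
                (complex_of_real lam + \<i> * complex_of_real (pi / a * of_int n)) m))
       \<and> ((\<forall>j<m. (deriv ^^ j) (gauss_ext a c) (complex_of_real lam) = 0) \<longrightarrow>
            (\<forall>n::int. \<forall>j<m. (deriv ^^ j) (gauss_ext a c)
                (complex_of_real lam + \<i> * complex_of_real (pi / a * of_int n)) = 0))"
proof -
  define E :: "int \<Rightarrow> complex \<Rightarrow> complex" where
    "E n z = exp (of_real a * of_real (pi / a * of_int n) ^ 2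
                  - 2 * \<i> * of_real a * of_real (pi / a * of_int n) * z)" for n z
  have translate: "gauss_ext a c (z + \<i> * of_real (pi / a * of_int n)) = E n z * gauss_ext a c z"
    for n z
    unfolding E_def using assms(1) by (intro gauss_ext_translate_imag) simp
  have holo_F: "gauss_ext a c holomorphic_on UNIV"
    by (rule gauss_ext_holomorphic [OF assms])
  have holo_E: "E n holomorphic_on UNIV" for n
    unfolding E_def by (intro holomorphic_intros)
  have "E n z \<noteq> 0" for n z
    by (simp add: E_def)
  then show ?thesis
    using zero_mult_translate [OF holo_F holo_E translate]
      higher_deriv_translate_eq_0 [OF holo_F holo_E translate]
    by blast
qed

end
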